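(* Let the real-valued $f(x)$ possess an entire complex extension $f(z)$, and let $0<\omega<a<\infty$. Then \begin{equation} \int_{0}^{a}\frac{f(x)}{\omega^{2}+x^{2}}\mathrm{d}x = \sum_{k=0}^{\infty}(-1)^{k}\omega^{2k}\,\mathrm{FP}\!\int_{0}^{a}\frac{f(x)}{x^{2k+2}}\mathrm{d}x +\frac{\pi}{2\omega}\mathrm{Re}f(\omega i) - \frac{\ln \omega}{\omega}\mathrm{Im}f(\omega i) . \end{equation}
   Context: $\mathrm{FP}\!\int_0^a g(x)x^{-p}\,\mathrm{d}x$ denotes the (Hadamard) finite part of a possibly divergent integral: for $0<\epsilon<a$ one writes $\int_\epsilon^a g(x)x^{-p}\,\mathrm{d}x = C_\epsilon + D_\epsilon$, where $C_\epsilon$ collects the terms having a finite limit as $\epsilon\to0$ and $D_\epsilon$ the terms diverging in that limit, and sets the finite part equal to $\lim_{\epsilon\to0}C_\epsilon$. *)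

theory Defs
  imports "HOL-Complex_Analysis.Complex_Analysis"
begin

text \<open>Hadamard finite part of \<open>\<integral>_0^a g(x) x^(-p) dx\<close> for natural p:
  \<open>\<integral>_\<epsilon>^a g(x) x^(-p) dx\<close> splits as a part with a finite limit plus the divergent
  terms, which (for the integrands considered) are linear combinations of
  negative powers of \<open>\<epsilon>\<close> and of \<open>ln \<epsilon>\<close>; the finite part is the limit of the rest.\<close>

definition has_finite_part :: "(real \<Rightarrow> real) \<Rightarrow> nat \<Rightarrow> real \<Rightarrow> real \<Rightarrow> bool" where
  "has_finite_part g p a L \<longleftrightarrow>
     (\<exists>(n::nat) (c::nat \<Rightarrow> real) (d::real).
        ((\<lambda>\<epsilon>. integral {\<epsilon>..a} (\<lambda>x. g x / x ^ p)
               - (\<Sum>j=1..n. c j / \<epsilon> ^ j) - d * ln \<epsilon>) \<longlongrightarrow> L) (at_right 0))"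

definition finite_part :: "(real \<Rightarrow> real) \<Rightarrow> nat \<Rightarrow> real \<Rightarrow> real" where
  "finite_part g p a = (THE L. has_finite_part g p a L)"

end

theory Submission
  imports Defs "HOL-Real_Asymp.Real_Asymp"
begin

text \<open>Write \<open>f = \<Sum> c\<^sub>n x\<^sup>n\<close>; the coefficients are real because \<open>f\<close> is real on the real line.
  For a monomial, the finite part of \<open>\<integral>\<^sub>0\<^sup>a x\<^sup>n x\<^sup>-\<^sup>p\<close> is the value at \<open>a\<close> of the antiderivative
  of \<open>x\<^sup>n\<^sup>-\<^sup>p\<close> without constant (\<open>ln x\<close> when \<open>n - p = -1\<close>). Hence the left-hand series is the
  double series \<open>\<Sum>\<^sub>k \<Sum>\<^sub>n c\<^sub>n (-1)\<^sup>k \<omega>\<^sup>2\<^sup>k FP\<integral>\<^sub>0\<^sup>a x\<^sup>n\<^sup>-\<^sup>2\<^sup>k\<^sup>-\<^sup>2\<close>, which converges absolutely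
  because \<open>\<omega> < a\<close>; interchanging the sums gives \<open>\<Sum>\<^sub>n c\<^sub>n T\<^sub>n\<close>.
  Both \<open>T\<^sub>n\<close> and the moments \<open>I\<^sub>n = \<integral>\<^sub>0\<^sup>a x\<^sup>n / (\<omega>\<^sup>2 + x\<^sup>2)\<close> satisfy
  \<open>u\<^sub>n\<^sub>+\<^sub>2 = a\<^sup>n\<^sup>+\<^sup>1 / (n + 1) - \<omega>\<^sup>2 u\<^sub>n\<close>, while \<open>E\<^sub>n = \<pi>/(2\<omega>) Re (i\<omega>)\<^sup>n - ln \<omega> / \<omega> Im (i\<omega>)\<^sup>n\<close>
  satisfies \<open>E\<^sub>n\<^sub>+\<^sub>2 = -\<omega>\<^sup>2 E\<^sub>n\<close>. So \<open>T\<^sub>n = I\<^sub>n - E\<^sub>n\<close> follows from the cases \<open>n = 0\<close>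
  (the arctangent series and \<open>arctan (\<omega>/a) + arctan (a/\<omega>) = \<pi>/2\<close>) and \<open>n = 1\<close> (the logarithm
  series), and summing against \<open>c\<^sub>n\<close> yields the theorem.\<close>

lemma sums_integral_termwise:
  fixes g :: "nat \<Rightarrow> real \<Rightarrow> real"
  assumes cont: "\<And>n. continuous_on {lo..hi} (g n)"
    and bound: "\<And>n x. x \<in> {lo..hi} \<Longrightarrow> \<bar>g n x\<bar> \<le> M n" and "summable M"
  shows "(\<lambda>n. integral {lo..hi} (g n)) sums integral {lo..hi} (\<lambda>x. \<Sum>n. g n x)"
proof -
  have unif: "uniform_limit {lo..hi} (\<lambda>n x. \<Sum>i<n. g i x) (\<lambda>x. \<Sum>i. g i x) sequentially"
    by (rule Weierstrass_m_test) (use bound \<open>summable M\<close> in auto)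
  have "\<And>n. continuous_on {lo..hi} (\<lambda>x. \<Sum>i<n. g i x)"
    by (intro continuous_intros cont)
  then obtain I J where I: "\<And>n. ((\<lambda>x. \<Sum>i<n. g i x) has_integral I n) {lo..hi}"
    and J: "((\<lambda>x. \<Sum>i. g i x) has_integral J) {lo..hi}" and "I \<longlonglongrightarrow> J"
    using uniform_limit_integral[OF unif] by auto
  have "I = (\<lambda>n. \<Sum>i<n. integral {lo..hi} (g i))"
  proof
    fix n
    have "((\<lambda>x. \<Sum>i<n. g i x) has_integral (\<Sum>i<n. integral {lo..hi} (g i))) {lo..hi}"
      by (intro has_integral_sum integrable_integral integrable_continuous_real cont) auto
    then show "I n = (\<Sum>i<n. integral {lo..hi} (g i))" using I has_integral_unique by blast
  qed
  with \<open>I \<longlonglongrightarrow> J\<close> show ?thesis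
    using integral_unique[OF J] unfolding sums_def by simp
qed

lemma abs_summable_on_product:
  fixes u v :: "nat \<Rightarrow> real"
  assumes su: "summable u" and sv: "summable v" and u0: "\<And>n. u n \<ge> 0" and v0: "\<And>k. v k \<ge> 0"
  shows "(\<lambda>x. norm (case x of (n, k) \<Rightarrow> u n * v k)) summable_on UNIV \<times> UNIV"
proof (rule Infinite_Sum.abs_summable_on_Sigma_iff[THEN iffD2], intro conjI ballI)
  fix n :: nat
  have "summable (\<lambda>k. norm (norm (u n * v k)))"
    using u0 v0 by (simp add: abs_mult summable_mult sv)
  then show "(\<lambda>k. norm (case (n, k) of (n, k) \<Rightarrow> u n * v k)) summable_on UNIV"
    by (simp add: norm_summable_imp_summable_on)
next
  have row: "infsum (\<lambda>k. norm (case (n, k) of (n, k) \<Rightarrow> u n * v k)) UNIV = u n * suminf v" for n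
  proof -
    have "((\<lambda>k. norm (u n * v k)) has_sum u n * suminf v) UNIV"
      using u0 v0 sv
      by (intro norm_summable_imp_has_sum) (auto simp: abs_mult summable_mult intro!: sums_mult summable_sums)
    then show ?thesis by (simp add: infsumI)
  qed
  have "summable (\<lambda>n. norm (norm (u n * suminf v)))"
    using u0 v0 su sv suminf_nonneg[OF sv v0] by (simp add: abs_mult summable_mult2)
  then show "(\<lambda>n. norm (infsum (\<lambda>k. norm (case (n, k) of (n, k) \<Rightarrow> u n * v k)) UNIV)) summable_on UNIV"
    unfolding row by (rule norm_summable_imp_summable_on)
qed

lemma sums_swap_of_product_bound:
  fixes G :: "nat \<Rightarrow> nat \<Rightarrow> real"
  assumes bound: "\<And>n k. \<bar>G n k\<bar> \<le> u n * v k" and su: "summable u" and sv: "summable v"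
    and u0: "\<And>n. u n \<ge> 0" and v0: "\<And>k. v k \<ge> 0"
    and rows: "\<And>n. (\<lambda>k. G n k) sums R n" and cols: "\<And>k. (\<lambda>n. G n k) sums C k"
    and "R sums X"
  shows "C sums X"
proof -
  have G_summable: "(\<lambda>(n, k). G n k) summable_on UNIV \<times> UNIV"
  proof (rule Infinite_Sum.abs_summable_summable,
      rule Infinite_Sum.abs_summable_on_comparison_test[OF abs_summable_on_product[OF su sv u0 v0]])
    fix x :: "nat \<times> nat" show "norm (case x of (n, k) \<Rightarrow> G n k) \<le> norm (case x of (n, k) \<Rightarrow> u n * v k)"
      using bound u0 v0 by (cases x) (auto simp: abs_mult)
  qed
  have R_infsum: "R n = infsum (\<lambda>k. G n k) UNIV" for n
  proof -
    have "summable (\<lambda>k. norm (G n k))"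
      by (rule summable_comparison_test[of _ "\<lambda>k. u n * v k"])
        (use bound sv in \<open>auto intro: summable_mult\<close>)
    then have "((\<lambda>k. G n k) has_sum R n) UNIV" by (rule norm_summable_imp_has_sum[OF _ rows])
    then show ?thesis by (simp add: infsumI)
  qed
  have C_infsum: "C k = infsum (\<lambda>n. G n k) UNIV" for k
  proof -
    have "summable (\<lambda>n. norm (G n k))"
      by (rule summable_comparison_test[of _ "\<lambda>n. u n * v k"])
        (use bound su in \<open>auto intro: summable_mult2\<close>)
    then have "((\<lambda>n. G n k) has_sum C k) UNIV" by (rule norm_summable_imp_has_sum[OF _ cols])
    then show ?thesis by (simp add: infsumI)
  qed
  have "R summable_on UNIV"
    unfolding R_infsum using summable_on_Sigma_banach[OF G_summable] by simp
  then have "infsum R UNIV = X"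
    using has_sum_imp_sums[OF has_sum_infsum] \<open>R sums X\<close> sums_unique2 by blast
  moreover have "infsum C UNIV = infsum R UNIV"
    unfolding R_infsum C_infsum using infsum_swap_banach[of "\<lambda>n k. G n k" UNIV UNIV] G_summable
    by simp
  moreover have "(\<lambda>(k, n). G n k) summable_on UNIV \<times> UNIV"
    using iffD1[OF summable_on_swap G_summable] by simp
  then have "C summable_on UNIV"
    unfolding C_infsum using summable_on_Sigma_banach by fastforce
  ultimately show ?thesis using has_sum_imp_sums[OF has_sum_infsum] by metis
qed

lemma tendsto_const_times_ln_at_right_0_imp_zero:
  assumes "((\<lambda>t. D * ln t) \<longlongrightarrow> C) (at_right (0::real))"
  shows "D = 0"
proof (rule ccontr)
  assume "D \<noteq> 0"
  then have "((\<lambda>t. (D * ln t) / D) \<longlongrightarrow> C / D) (at_right 0)"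
    by (intro tendsto_divide assms) auto
  then have "(ln \<longlongrightarrow> C / D) (at_right (0::real))"
    using \<open>D \<noteq> 0\<close> by simp
  moreover have "filterlim ln at_infinity (at_right (0::real))"
    by (rule filterlim_mono[OF ln_at_0 at_bot_le_at_infinity order_refl])
  ultimately show False
    using not_tendsto_and_filterlim_at_infinity[of "at_right (0::real)"] by simp
qed

lemma tendsto_inverse_powers_plus_ln_imp_zero:
  fixes e :: "nat \<Rightarrow> real"
  assumes "((\<lambda>t. (\<Sum>j=1..N. e j / t ^ j) + D * ln t) \<longlongrightarrow> C) (at_right 0)"
  shows "C = 0"
  using assms
proof (induction N arbitrary: e D C)
  case 0
  then have "((\<lambda>t. D * ln t) \<longlongrightarrow> C) (at_right 0)" by simp
  moreover from this have "D = 0" by (rule tendsto_const_times_ln_at_right_0_imp_zero)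
  ultimately show ?case using tendsto_unique[OF _ tendsto_const] by force
next
  case (Suc N)
  txt \<open>Multiplied by \<open>t\<^sup>N\<^sup>+\<^sup>1\<close>, the expression tends both to \<open>0\<close> and to its leading coefficient.\<close>
  define \<phi> where "\<phi> = (\<lambda>t::real. (\<Sum>j=1..Suc N. e j / t ^ j) + D * ln t)"
  have "(\<phi> \<longlongrightarrow> C) (at_right 0)" using Suc.prems by (simp add: \<phi>_def)
  then have "((\<lambda>t. t ^ Suc N * \<phi> t) \<longlongrightarrow> 0 ^ Suc N * C) (at_right 0)"
    by (intro tendsto_intros)
  then have scaled_to_0: "((\<lambda>t. t ^ Suc N * \<phi> t) \<longlongrightarrow> 0) (at_right 0)" by simp
  have expand: "\<forall>\<^sub>F t in at_right 0. t ^ Suc N * \<phi> t =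
      e (Suc N) + (\<Sum>j=1..N. e j * t ^ (Suc N - j)) + D * (t ^ N * (t * ln t))"
  proof (rule eventually_at_right_less[THEN eventually_mono])
    fix t :: real assume "0 < t"
    have "t ^ Suc N * (\<Sum>j=1..N. e j / t ^ j) = (\<Sum>j=1..N. e j * t ^ (Suc N - j))"
      unfolding sum_distrib_left
    proof (rule sum.cong)
      fix j assume "j \<in> {1..N}"
      then have "t ^ Suc N = t ^ (Suc N - j) * t ^ j" by (simp flip: power_add)
      then show "t ^ Suc N * (e j / t ^ j) = e j * t ^ (Suc N - j)" using \<open>0 < t\<close> by simp
    qed simp
    then show "t ^ Suc N * \<phi> t =
      e (Suc N) + (\<Sum>j=1..N. e j * t ^ (Suc N - j)) + D * (t ^ N * (t * ln t))"
      using \<open>0 < t\<close> by (simp add: \<phi>_def algebra_simps)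
  qed
  have "((\<lambda>t::real. t * ln t) \<longlongrightarrow> 0) (at_right 0)" by real_asymp
  then have "((\<lambda>t. e (Suc N) + (\<Sum>j=1..N. e j * t ^ (Suc N - j)) + D * (t ^ N * (t * ln t)))
      \<longlongrightarrow> e (Suc N) + (\<Sum>j=1..N. e j * 0 ^ (Suc N - j)) + D * (0 ^ N * 0)) (at_right 0)"
    by (intro tendsto_intros)
  moreover have "(\<Sum>j=1..N. e j * (0::real) ^ (Suc N - j)) = 0"
    by (intro sum.neutral) auto
  ultimately have "((\<lambda>t. t ^ Suc N * \<phi> t) \<longlongrightarrow> e (Suc N)) (at_right 0)"
    using tendsto_cong[OF expand] by (simp only:) simp
  then have "e (Suc N) = 0" using tendsto_unique[OF _ _ scaled_to_0] by force
  then have "((\<lambda>t. (\<Sum>j=1..N. e j / t ^ j) + D * ln t) \<longlongrightarrow> C) (at_right 0)"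
    using \<open>(\<phi> \<longlongrightarrow> C) (at_right 0)\<close> by (simp add: \<phi>_def)
  then show ?case by (rule Suc.IH)
qed

lemma sum_inverse_powers_pad:
  fixes c :: "nat \<Rightarrow> real"
  assumes "n \<le> N"
  shows "(\<Sum>j=1..n. c j / t ^ j) = (\<Sum>j=1..N. (if j \<le> n then c j else 0) / t ^ j)"
  by (rule sum.mono_neutral_cong_left) (use assms in auto)

lemma has_finite_part_unique:
  assumes "has_finite_part g p b L1" "has_finite_part g p b L2"
  shows "L1 = L2"
proof -
  obtain n1 c1 d1 where lim1: "((\<lambda>\<epsilon>. integral {\<epsilon>..b} (\<lambda>x. g x / x ^ p)
      - (\<Sum>j=1..n1. c1 j / \<epsilon> ^ j) - d1 * ln \<epsilon>) \<longlongrightarrow> L1) (at_right 0)"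
    using assms(1) unfolding has_finite_part_def by blast
  obtain n2 c2 d2 where lim2: "((\<lambda>\<epsilon>. integral {\<epsilon>..b} (\<lambda>x. g x / x ^ p)
      - (\<Sum>j=1..n2. c2 j / \<epsilon> ^ j) - d2 * ln \<epsilon>) \<longlongrightarrow> L2) (at_right 0)"
    using assms(2) unfolding has_finite_part_def by blast
  define N where "N = max n1 n2"
  define e where "e j = (if j \<le> n2 then c2 j else 0) - (if j \<le> n1 then c1 j else 0)" for j
  have "(integral {\<epsilon>..b} (\<lambda>x. g x / x ^ p) - (\<Sum>j=1..n1. c1 j / \<epsilon> ^ j) - d1 * ln \<epsilon>)
      - (integral {\<epsilon>..b} (\<lambda>x. g x / x ^ p) - (\<Sum>j=1..n2. c2 j / \<epsilon> ^ j) - d2 * ln \<epsilon>)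
      = (\<Sum>j=1..N. e j / \<epsilon> ^ j) + (d2 - d1) * ln \<epsilon>" for \<epsilon> :: real
    using sum_inverse_powers_pad[of n1 N c1 \<epsilon>] sum_inverse_powers_pad[of n2 N c2 \<epsilon>]
    by (simp add: N_def e_def diff_divide_distrib sum_subtractf algebra_simps)
  with tendsto_diff[OF lim1 lim2]
  have "((\<lambda>\<epsilon>. (\<Sum>j=1..N. e j / \<epsilon> ^ j) + (d2 - d1) * ln \<epsilon>) \<longlongrightarrow> L1 - L2) (at_right 0)"
    by simp
  then show ?thesis using tendsto_inverse_powers_plus_ln_imp_zero by fastforce
qed

lemma finite_part_eqI:
  assumes "has_finite_part g p b L"
  shows "finite_part g p b = L"
  unfolding finite_part_def using assms has_finite_part_unique by blast

lemma at_within_Reals_nontrivial: "at (complex_of_real x) within \<real> \<noteq> bot"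
proof -
  have "complex_of_real x islimpt \<real>"
    unfolding islimpt_approachable
  proof (intro allI impI)
    fix e :: real assume "0 < e"
    show "\<exists>x'\<in>\<real>. x' \<noteq> complex_of_real x \<and> dist x' (complex_of_real x) < e"
      by (rule bexI[of _ "complex_of_real (x + e/2)"]) (use \<open>0 < e\<close> in \<open>auto simp: dist_norm\<close>)
  qed
  then show ?thesis using trivial_limit_within by blast
qed

lemma deriv_in_Reals:
  assumes "G holomorphic_on UNIV" and real: "\<forall>x::real. G (complex_of_real x) \<in> \<real>"
  shows "deriv G (complex_of_real x) \<in> \<real>"
proof -
  let ?z = "complex_of_real x"
  have "(G has_field_derivative deriv G ?z) (at ?z within \<real>)"
    using assms(1) holomorphic_derivI by blast
  then have "((\<lambda>y. (G y - G ?z) / (y - ?z)) \<longlongrightarrow> deriv G ?z) (at ?z within \<real>)"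
    by (simp add: has_field_derivative_iff)
  moreover have "\<forall>\<^sub>F y in at ?z within \<real>. (G y - G ?z) / (y - ?z) \<in> \<real>"
    using real unfolding eventually_at_filter
    by (intro always_eventually) (auto intro!: Reals_divide Reals_diff elim!: Reals_cases)
  ultimately show ?thesis
    by (rule Lim_in_closed_set[OF closed_complex_Reals _ at_within_Reals_nontrivial, rotated])
qed

lemma higher_deriv_in_Reals:
  assumes "F holomorphic_on UNIV" and "\<forall>x::real. F (complex_of_real x) \<in> \<real>"
  shows "(deriv ^^ n) F holomorphic_on UNIV \<and> (\<forall>x::real. (deriv ^^ n) F (complex_of_real x) \<in> \<real>)"
proof (induction n)
  case 0 then show ?case using assms by simp
next
  case (Suc n) then show ?case by (auto intro: holomorphic_deriv deriv_in_Reals)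
qed

lemma entire_real_on_Reals_real_power_series:
  assumes "F holomorphic_on UNIV" and "\<forall>x::real. F (complex_of_real x) \<in> \<real>"
  obtains c :: "nat \<Rightarrow> real" where "\<And>z. (\<lambda>n. complex_of_real (c n) * z ^ n) sums F z"
proof
  fix z
  have "(\<lambda>n. (deriv ^^ n) F 0 / fact n * (z - 0) ^ n) sums F z"
    by (rule holomorphic_power_series[where r = "norm z + 1"])
      (use assms(1) in \<open>auto intro: holomorphic_on_subset\<close>)
  moreover have "(deriv ^^ n) F 0 / fact n \<in> \<real>" for n
    using higher_deriv_in_Reals[OF assms, of n] of_real_0
    by (metis Reals_divide fact_in_Reals)
  ultimately show "(\<lambda>n. complex_of_real (Re ((deriv ^^ n) F 0 / fact n)) * z ^ n) sums F z"
    by (simp add: complex_is_Real_iff)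
qed

text \<open>The antiderivative of \<open>x\<^sup>n / x\<^sup>p\<close> without integration constant; its value at \<open>b\<close> is the
  finite part of \<open>\<integral>\<^sub>0\<^sup>b x\<^sup>n / x\<^sup>p\<close>.\<close>

definition pow_antideriv :: "real \<Rightarrow> nat \<Rightarrow> nat \<Rightarrow> real" where
  "pow_antideriv t n p =
     (if n + 1 = p then ln t else t powr (real n + 1 - real p) / (real n + 1 - real p))"

lemma has_integral_power_divide_power:
  fixes t b :: real
  assumes "0 < t" "t \<le> b"
  shows "((\<lambda>x. x ^ n / x ^ p) has_integral (pow_antideriv b n p - pow_antideriv t n p)) {t..b}"
proof (cases "n + 1 = p")
  case True
  have "((\<lambda>x. x ^ n / x ^ p) has_integral (ln b - ln t)) {t..b}"
  proof (rule fundamental_theorem_of_calculus[OF assms(2)])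
    fix x assume "x \<in> {t..b}"
    then have "x > 0" using assms by auto
    then have "(ln has_real_derivative x ^ n / x ^ p) (at x)"
      using True by (auto intro!: derivative_eq_intros simp: field_simps)
    then show "(ln has_vector_derivative x ^ n / x ^ p) (at x within {t..b})"
      by (metis has_field_derivative_at_within has_real_derivative_iff_has_vector_derivative)
  qed
  then show ?thesis using True by (simp add: pow_antideriv_def)
next
  case False
  define e where "e = real n + 1 - real p"
  have "e \<noteq> 0" using False unfolding e_def by linarith
  have "((\<lambda>x. x ^ n / x ^ p) has_integral (b powr e / e - t powr e / e)) {t..b}"
  proof (rule fundamental_theorem_of_calculus[OF assms(2)])
    fix x assume "x \<in> {t..b}"
    then have "x > 0" using assms by auto
    have "((\<lambda>x. x powr e / e) has_real_derivative (e * x powr (e - 1)) / e) (at x)"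
      by (intro DERIV_cdivide has_real_derivative_powr \<open>x > 0\<close>)
    moreover have "(e * x powr (e - 1)) / e = x ^ n / x ^ p"
    proof -
      have "x powr (e - 1) = x powr real n / x powr real p" by (simp add: e_def powr_diff)
      also have "\<dots> = x ^ n / x ^ p" using \<open>x > 0\<close> by (simp add: powr_realpow)
      finally show ?thesis using \<open>e \<noteq> 0\<close> by simp
    qed
    ultimately show "((\<lambda>x. x powr e / e) has_vector_derivative x ^ n / x ^ p) (at x within {t..b})"
      by (metis has_field_derivative_at_within has_real_derivative_iff_has_vector_derivative)
  qed
  then show ?thesis using False by (simp add: pow_antideriv_def e_def diff_divide_distrib)
qed

lemma abs_pow_antideriv_le_of_le:
  assumes "0 < t" "t \<le> b" "p \<le> n"
  shows "\<bar>pow_antideriv t n p\<bar> \<le> t * (b ^ n / b ^ p)"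
proof -
  obtain m where n: "n = m + p" using assms(3) le_Suc_ex by (metis add.commute)
  then have "pow_antideriv t n p = t powr real (Suc m) / real (Suc m)"
    by (simp add: pow_antideriv_def add_ac)
  then have "pow_antideriv t n p = t ^ Suc m / real (Suc m)"
    using assms(1) by (simp only: powr_realpow)
  then have "\<bar>pow_antideriv t n p\<bar> = t ^ Suc m / real (Suc m)" using assms(1) by simp
  also have "\<dots> \<le> t * t ^ m" using assms(1) by (simp add: divide_le_eq)
  also have "\<dots> \<le> t * b ^ m" using assms by (intro mult_left_mono power_mono) auto
  also have "b ^ m = b ^ n / b ^ p" using assms n by (simp add: power_add)
  finally show ?thesis .
qed

lemma abs_pow_antideriv_le:
  assumes "0 < b"
  shows "\<bar>pow_antideriv b n p\<bar> \<le> (1 + \<bar>ln b\<bar>) * (b ^ n * b / b ^ p)"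
proof (cases "n + 1 = p")
  case True
  then have "b ^ n * b / b ^ p = 1" using assms by (simp add: True[symmetric] power_Suc2)
  then show ?thesis using True by (simp add: pow_antideriv_def)
next
  case False
  define e where "e = real n + 1 - real p"
  have "e = real_of_int (int n + 1 - int p)" and "int n + 1 - int p \<noteq> 0"
    using False by (auto simp: e_def)
  then have "\<bar>e\<bar> \<ge> 1" by linarith
  have "b powr e = b ^ n * b / b ^ p"
  proof -
    have "b powr e = b powr (real (Suc n)) / b powr (real p)"
      by (simp add: e_def powr_diff add_ac)
    also have "\<dots> = b ^ n * b / b ^ p" by (simp only: powr_realpow[OF assms]) simp
    finally show ?thesis .
  qed
  moreover have "\<bar>pow_antideriv b n p\<bar> = b powr e / \<bar>e\<bar>"
    using False by (simp add: pow_antideriv_def e_def)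
  moreover have "b powr e / \<bar>e\<bar> \<le> b powr e"
    using divide_left_mono[OF \<open>\<bar>e\<bar> \<ge> 1\<close>, of "b powr e"] \<open>\<bar>e\<bar> \<ge> 1\<close> by simp
  moreover have "b powr e \<le> (1 + \<bar>ln b\<bar>) * b powr e"
    using mult_right_mono[of 1 "1 + \<bar>ln b\<bar>" "b powr e"] by simp
  ultimately show ?thesis by simp
qed

lemma summable_pow_antideriv:
  assumes "0 < t" "t \<le> b" and abs_summable: "summable (\<lambda>n. \<bar>c n\<bar> * b ^ n)"
  shows "summable (\<lambda>n. c n * pow_antideriv t n p)"
proof (rule summable_comparison_test_ev)
  show "\<forall>\<^sub>F n in sequentially. norm (c n * pow_antideriv t n p) \<le> \<bar>c n\<bar> * b ^ n * (t / b ^ p)"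
  proof (rule eventually_sequentiallyI[of p])
    fix n assume "p \<le> n"
    have "norm (c n * pow_antideriv t n p) \<le> \<bar>c n\<bar> * (t * (b ^ n / b ^ p))"
      unfolding real_norm_def abs_mult
      by (intro mult_left_mono abs_pow_antideriv_le_of_le) (use assms \<open>p \<le> n\<close> in auto)
    then show "norm (c n * pow_antideriv t n p) \<le> \<bar>c n\<bar> * b ^ n * (t / b ^ p)"
      by (simp add: mult_ac)
  qed
  show "summable (\<lambda>n. \<bar>c n\<bar> * b ^ n * (t / b ^ p))" by (intro summable_mult2 abs_summable)
qed

lemma integral_power_series_divide_power:
  fixes c :: "nat \<Rightarrow> real" and f :: "real \<Rightarrow> real"
  assumes t: "0 < t" "t \<le> b" and f_sums: "\<And>x. (\<lambda>n. c n * x ^ n) sums f x"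
    and abs_summable: "summable (\<lambda>n. \<bar>c n\<bar> * b ^ n)"
  shows "integral {t..b} (\<lambda>x. f x / x ^ p)
    = (\<Sum>n. c n * pow_antideriv b n p) - (\<Sum>n. c n * pow_antideriv t n p)"
proof -
  have "(\<lambda>n. integral {t..b} (\<lambda>x. c n * (x ^ n / x ^ p))) sums
      integral {t..b} (\<lambda>x. \<Sum>n. c n * (x ^ n / x ^ p))"
  proof (rule sums_integral_termwise[where M = "\<lambda>n. \<bar>c n\<bar> * b ^ n * (1 / t ^ p)"])
    show "continuous_on {t..b} (\<lambda>x. c n * (x ^ n / x ^ p))" for n
      using t by (intro continuous_intros) auto
    show "summable (\<lambda>n. \<bar>c n\<bar> * b ^ n * (1 / t ^ p))" by (intro summable_mult2 abs_summable)
    fix n x assume x: "x \<in> {t..b}"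
    have "\<bar>c n * (x ^ n / x ^ p)\<bar> = \<bar>c n\<bar> * (x ^ n / x ^ p)" using x t by (simp add: abs_mult)
    also have "\<dots> \<le> \<bar>c n\<bar> * (b ^ n / t ^ p)"
      using x t by (intro mult_left_mono frac_le power_mono) auto
    finally show "\<bar>c n * (x ^ n / x ^ p)\<bar> \<le> \<bar>c n\<bar> * b ^ n * (1 / t ^ p)" by simp
  qed
  moreover have "integral {t..b} (\<lambda>x. c n * (x ^ n / x ^ p))
      = c n * (pow_antideriv b n p - pow_antideriv t n p)" for n
    by (intro integral_unique has_integral_mult_right has_integral_power_divide_power t)
  moreover have "(\<Sum>n. c n * (x ^ n / x ^ p)) = f x / x ^ p" for x
    using sums_divide[OF f_sums[of x], of "x ^ p"] by (simp add: sums_iff)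
  ultimately have "integral {t..b} (\<lambda>x. f x / x ^ p)
      = (\<Sum>n. c n * pow_antideriv b n p - c n * pow_antideriv t n p)"
    by (simp add: sums_iff right_diff_distrib)
  also have "\<dots> = (\<Sum>n. c n * pow_antideriv b n p) - (\<Sum>n. c n * pow_antideriv t n p)"
    using summable_pow_antideriv[OF _ order_refl abs_summable] summable_pow_antideriv[OF t abs_summable] t
    by (intro suminf_diff[symmetric]) auto
  finally show ?thesis .
qed

lemma tendsto_pow_antideriv_series_tail:
  fixes c :: "nat \<Rightarrow> real"
  assumes "0 < b" and abs_summable: "summable (\<lambda>n. \<bar>c n\<bar> * b ^ n)"
  shows "((\<lambda>t. \<Sum>m. c (m + p) * pow_antideriv t (m + p) p) \<longlongrightarrow> 0) (at_right 0)"
proof -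
  define K where "K = (\<Sum>m. \<bar>c (m + p)\<bar> * (b ^ (m + p) / b ^ p))"
  have K_summable: "summable (\<lambda>m. \<bar>c (m + p)\<bar> * (b ^ (m + p) / b ^ p))"
    using summable_mult2[OF summable_ignore_initial_segment[OF abs_summable, of p], of "1 / b ^ p"]
    by simp
  have tail_bound: "norm (\<Sum>m. c (m + p) * pow_antideriv t (m + p) p) \<le> t * K"
    if t: "0 < t" "t \<le> b" for t
  proof -
    have term_bound: "norm (c (m + p) * pow_antideriv t (m + p) p)
        \<le> t * (\<bar>c (m + p)\<bar> * (b ^ (m + p) / b ^ p))" for m
    proof -
      have "norm (c (m + p) * pow_antideriv t (m + p) p)
          \<le> \<bar>c (m + p)\<bar> * (t * (b ^ (m + p) / b ^ p))"
        unfolding real_norm_def abs_mult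
        by (intro mult_left_mono abs_pow_antideriv_le_of_le) (use t in auto)
      then show ?thesis by (simp add: algebra_simps)
    qed
    have major: "summable (\<lambda>m. t * (\<bar>c (m + p)\<bar> * (b ^ (m + p) / b ^ p)))"
      by (intro summable_mult K_summable)
    have minor: "summable (\<lambda>m. norm (c (m + p) * pow_antideriv t (m + p) p))"
      by (rule summable_comparison_test[OF _ major]) (use term_bound in auto)
    have "norm (\<Sum>m. c (m + p) * pow_antideriv t (m + p) p)
        \<le> (\<Sum>m. norm (c (m + p) * pow_antideriv t (m + p) p))"
      by (rule summable_norm[OF minor])
    also have "\<dots> \<le> (\<Sum>m. t * (\<bar>c (m + p)\<bar> * (b ^ (m + p) / b ^ p)))"
      by (rule suminf_le[OF term_bound minor major])
    also have "\<dots> = t * K" unfolding K_def by (rule suminf_mult[OF K_summable])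
    finally show ?thesis .
  qed
  have "\<forall>\<^sub>F t in at_right 0. 0 < t \<and> t \<le> b"
    unfolding eventually_at_right_field using \<open>0 < b\<close> by (intro exI[of _ b]) auto
  then have "\<forall>\<^sub>F t in at_right 0. norm (\<Sum>m. c (m + p) * pow_antideriv t (m + p) p) \<le> t * K"
    by eventually_elim (use tail_bound in auto)
  moreover have "((\<lambda>t. t * K) \<longlongrightarrow> 0) (at_right 0)"
    by (intro tendsto_mult_left_zero tendsto_ident_at)
  ultimately show ?thesis by (rule Lim_null_comparison)
qed

lemma pow_antideriv_series_head:
  fixes c :: "nat \<Rightarrow> real"
  assumes "0 < t"
  shows "(\<Sum>n<Suc q. c n * pow_antideriv t n (Suc q))
    = c q * ln t - (\<Sum>j=1..q. c (q - j) / real j / t ^ j)"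
proof -
  have "(\<Sum>n<q. c n * pow_antideriv t n (Suc q)) = (\<Sum>j=1..q. - (c (q - j) / real j / t ^ j))"
  proof (rule sum.reindex_bij_witness[of _ "\<lambda>j. q - j" "\<lambda>n. q - n"])
    fix n assume "n \<in> {..<q}"
    then have "n + 1 \<noteq> Suc q" "real n + 1 - real (Suc q) = - real (q - n)" "q - (q - n) = n"
      by auto
    then have "pow_antideriv t n (Suc q) = t powr (- real (q - n)) / (- real (q - n))"
      by (simp add: pow_antideriv_def)
    also have "\<dots> = - (1 / t ^ (q - n) / real (q - n))"
      using \<open>0 < t\<close> by (simp add: powr_minus powr_realpow divide_inverse)
    finally show "- (c (q - (q - n)) / real (q - n) / t ^ (q - n)) = c n * pow_antideriv t n (Suc q)"
      using \<open>q - (q - n) = n\<close> by simp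
  qed auto
  then show ?thesis by (simp add: pow_antideriv_def sum_negf)
qed

lemma has_finite_part_power_series:
  fixes c :: "nat \<Rightarrow> real" and f :: "real \<Rightarrow> real"
  assumes "0 < b" and f_sums: "\<And>x. (\<lambda>n. c n * x ^ n) sums f x"
    and abs_summable: "summable (\<lambda>n. \<bar>c n\<bar> * b ^ n)"
  shows "has_finite_part f (Suc q) b (\<Sum>n. c n * pow_antideriv b n (Suc q))"
proof -
  define S where "S = (\<Sum>n. c n * pow_antideriv b n (Suc q))"
  define tail where "tail t = (\<Sum>m. c (m + Suc q) * pow_antideriv t (m + Suc q) (Suc q))" for t
  have "integral {t..b} (\<lambda>x. f x / x ^ Suc q) - (\<Sum>j=1..q. c (q - j) / real j / t ^ j)
      - (- c q) * ln t = S - tail t" if "0 < t" "t \<le> b" for t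
  proof -
    have "(\<Sum>n. c n * pow_antideriv t n (Suc q))
        = tail t + (\<Sum>n<Suc q. c n * pow_antideriv t n (Suc q))"
      unfolding tail_def using summable_pow_antideriv[OF that abs_summable]
      by (rule suminf_split_initial_segment)
    then show ?thesis
      using integral_power_series_divide_power[OF that f_sums abs_summable, of "Suc q"]
        pow_antideriv_series_head[OF \<open>0 < t\<close>, of c q]
      by (simp add: S_def)
  qed
  then have "\<forall>\<^sub>F t in at_right 0. S - tail t = integral {t..b} (\<lambda>x. f x / x ^ Suc q)
      - (\<Sum>j=1..q. c (q - j) / real j / t ^ j) - (- c q) * ln t"
    unfolding eventually_at_right_field using \<open>0 < b\<close> by (intro exI[of _ b]) auto
  moreover have "((\<lambda>t. S - tail t) \<longlongrightarrow> S - 0) (at_right 0)"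
    unfolding tail_def
    by (intro tendsto_diff tendsto_const tendsto_pow_antideriv_series_tail[OF assms(1) abs_summable])
  ultimately have "((\<lambda>t. integral {t..b} (\<lambda>x. f x / x ^ Suc q)
      - (\<Sum>j=1..q. c (q - j) / real j / t ^ j) - (- c q) * ln t) \<longlongrightarrow> S) (at_right 0)"
    by (simp add: tendsto_cong)
  then show ?thesis
    unfolding has_finite_part_def S_def
    by (intro exI[of _ q] exI[of _ "\<lambda>j. c (q - j) / real j"] exI[of _ "- c q"])
qed

text \<open>The sequences \<open>T\<^sub>n\<close>, \<open>I\<^sub>n\<close> and \<open>E\<^sub>n\<close> of the sketch above:\<close>

definition fp_expansion_term :: "real \<Rightarrow> real \<Rightarrow> nat \<Rightarrow> nat \<Rightarrow> real" where
  "fp_expansion_term \<omega> b n k = (-1) ^ k * \<omega> ^ (2 * k) * pow_antideriv b n (2 * k + 2)"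

definition fp_expansion :: "real \<Rightarrow> real \<Rightarrow> nat \<Rightarrow> real" where
  "fp_expansion \<omega> b n = (\<Sum>k. fp_expansion_term \<omega> b n k)"

definition lorentz_moment :: "real \<Rightarrow> real \<Rightarrow> nat \<Rightarrow> real" where
  "lorentz_moment \<omega> b n = integral {0..b} (\<lambda>x. x ^ n / (\<omega>\<^sup>2 + x\<^sup>2))"

definition pole_correction :: "real \<Rightarrow> nat \<Rightarrow> real" where
  "pole_correction \<omega> n = pi / (2 * \<omega>) * Re ((\<i> * complex_of_real \<omega>) ^ n)
     - ln \<omega> / \<omega> * Im ((\<i> * complex_of_real \<omega>) ^ n)"

lemma abs_fp_expansion_term_le:
  assumes "0 < \<omega>" "\<omega> < b"
  shows "\<bar>fp_expansion_term \<omega> b n k\<bar> \<le> ((1 + \<bar>ln b\<bar>) / b * b ^ n) * ((\<omega> / b)\<^sup>2) ^ k"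
proof -
  have "0 < b" using assms by simp
  have "\<bar>fp_expansion_term \<omega> b n k\<bar> = \<omega> ^ (2 * k) * \<bar>pow_antideriv b n (2 * k + 2)\<bar>"
    using assms by (simp add: fp_expansion_term_def abs_mult power_abs)
  also have "\<dots> \<le> \<omega> ^ (2 * k) * ((1 + \<bar>ln b\<bar>) * (b ^ n * b / b ^ (2 * k + 2)))"
    using assms by (intro mult_left_mono abs_pow_antideriv_le) auto
  also have "\<dots> = ((1 + \<bar>ln b\<bar>) / b * b ^ n) * ((\<omega> / b)\<^sup>2) ^ k"
  proof -
    have omega_pow: "\<omega> ^ (2 * k) = (\<omega> * \<omega>) ^ k" by (simp add: power_mult power2_eq_square)
    have b_pow: "b ^ (2 * k + 2) = (b * b) ^ k * (b * b)"
      by (simp add: power_add power_mult power2_eq_square)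
    have ratio_pow: "((\<omega> / b)\<^sup>2) ^ k = (\<omega> * \<omega>) ^ k / (b * b) ^ k"
      by (simp add: power_divide power2_eq_square)
    have "(b * b) ^ k \<noteq> 0" using \<open>0 < b\<close> by simp
    then show ?thesis unfolding omega_pow b_pow ratio_pow using \<open>0 < b\<close> by (simp add: field_simps)
  qed
  finally show ?thesis .
qed

lemma norm_square_ratio_less_1:
  fixes \<omega> b :: real
  assumes "0 < \<omega>" "\<omega> < b"
  shows "norm ((\<omega> / b)\<^sup>2) < 1"
proof -
  have "\<omega> * \<omega> < b * b" using assms by (intro mult_strict_mono) auto
  then show ?thesis using assms by (simp add: power_divide power2_eq_square)
qed

lemma sums_fp_expansion:
  assumes "0 < \<omega>" "\<omega> < b"
  shows "(\<lambda>k. fp_expansion_term \<omega> b n k) sums fp_expansion \<omega> b n"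
proof -
  have "summable (\<lambda>k. ((1 + \<bar>ln b\<bar>) / b * b ^ n) * ((\<omega> / b)\<^sup>2) ^ k)"
    by (intro summable_mult summable_geometric norm_square_ratio_less_1 assms)
  then have "summable (\<lambda>k. fp_expansion_term \<omega> b n k)"
    by (rule summable_comparison_test[rotated]) (use abs_fp_expansion_term_le[OF assms] in auto)
  then show ?thesis unfolding fp_expansion_def by (rule summable_sums)
qed

lemma fp_expansion_rec:
  assumes "0 < \<omega>" "\<omega> < b"
  shows "fp_expansion \<omega> b (n + 2) = b ^ (n + 1) / real (n + 1) - \<omega>\<^sup>2 * fp_expansion \<omega> b n"
proof -
  have "pow_antideriv b (n + 2) (2 * Suc k + 2) = pow_antideriv b n (2 * k + 2)" for k
    unfolding pow_antideriv_def by simp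
  then have shift: "fp_expansion_term \<omega> b (n + 2) (Suc k) = - \<omega>\<^sup>2 * fp_expansion_term \<omega> b n k" for k
    unfolding fp_expansion_term_def by (simp add: power2_eq_square)
  have "real (n + 2) + 1 - real (2 * 0 + 2) = real (Suc n)" by simp
  then have "pow_antideriv b (n + 2) (2 * 0 + 2) = b powr real (Suc n) / real (Suc n)"
    unfolding pow_antideriv_def by simp
  then have term_0: "fp_expansion_term \<omega> b (n + 2) 0 = b ^ (n + 1) / real (n + 1)"
    using assms by (simp add: fp_expansion_term_def powr_add powr_realpow)
  have "(\<lambda>k. - \<omega>\<^sup>2 * fp_expansion_term \<omega> b n k) sums (- \<omega>\<^sup>2 * fp_expansion \<omega> b n)"
    by (rule sums_mult[OF sums_fp_expansion[OF assms]])
  then have "(\<lambda>k. fp_expansion_term \<omega> b (n + 2) (Suc k)) sums (- \<omega>\<^sup>2 * fp_expansion \<omega> b n)"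
    by (simp only: shift)
  then have "fp_expansion_term \<omega> b (n + 2)
      sums (- \<omega>\<^sup>2 * fp_expansion \<omega> b n + fp_expansion_term \<omega> b (n + 2) 0)"
    by (simp only: sums_Suc_iff)
  then have "fp_expansion \<omega> b (n + 2) = - \<omega>\<^sup>2 * fp_expansion \<omega> b n + fp_expansion_term \<omega> b (n + 2) 0"
    using sums_fp_expansion[OF assms] sums_unique2 by blast
  then show ?thesis using term_0 by simp
qed

lemma has_integral_power:
  assumes "0 \<le> b"
  shows "((\<lambda>x::real. x ^ n) has_integral b ^ (n + 1) / real (n + 1)) {0..b}"
proof -
  have "((\<lambda>x::real. x ^ n) has_integral (b ^ (n + 1) / real (n + 1) - 0 ^ (n + 1) / real (n + 1))) {0..b}"
  proof (rule fundamental_theorem_of_calculus[OF assms])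
    fix x :: real assume "x \<in> {0..b}"
    have "((\<lambda>x. x ^ (n + 1) / real (n + 1))
        has_real_derivative (real (n + 1) * x ^ n) / real (n + 1)) (at x)"
      by (intro derivative_eq_intros) auto
    then show "((\<lambda>x. x ^ (n + 1) / real (n + 1)) has_vector_derivative x ^ n) (at x within {0..b})"
      by (simp add: has_real_derivative_iff_has_vector_derivative[symmetric]
          has_field_derivative_at_within del: of_nat_Suc)
  qed
  then show ?thesis by simp
qed

lemma lorentz_moment_rec:
  assumes "0 < \<omega>" "0 \<le> b"
  shows "lorentz_moment \<omega> b (n + 2) = b ^ (n + 1) / real (n + 1) - \<omega>\<^sup>2 * lorentz_moment \<omega> b n"
proof -
  have pos: "\<omega>\<^sup>2 + x\<^sup>2 \<noteq> 0" for x :: real using assms by (simp add: add_pos_nonneg)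
  have integrable: "(\<lambda>x. x ^ n / (\<omega>\<^sup>2 + x\<^sup>2)) integrable_on {0..b}"
    using pos by (intro integrable_continuous_interval continuous_intros) auto
  have "x ^ (n + 2) / (\<omega>\<^sup>2 + x\<^sup>2) = x ^ n - \<omega>\<^sup>2 * (x ^ n / (\<omega>\<^sup>2 + x\<^sup>2))" for x :: real
    using pos[of x] by (simp add: field_simps power2_eq_square)
  then have "lorentz_moment \<omega> b (n + 2)
      = integral {0..b} (\<lambda>x. x ^ n - \<omega>\<^sup>2 * (x ^ n / (\<omega>\<^sup>2 + x\<^sup>2)))"
    by (simp add: lorentz_moment_def)
  also have "\<dots> = integral {0..b} (\<lambda>x. x ^ n) - integral {0..b} (\<lambda>x. \<omega>\<^sup>2 * (x ^ n / (\<omega>\<^sup>2 + x\<^sup>2)))"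
    using pos by (intro integral_diff integrable_continuous_interval continuous_intros) auto
  also have "integral {0..b} (\<lambda>x. x ^ n) = b ^ (n + 1) / real (n + 1)"
    using has_integral_power[OF assms(2)] by (rule integral_unique)
  also have "integral {0..b} (\<lambda>x. \<omega>\<^sup>2 * (x ^ n / (\<omega>\<^sup>2 + x\<^sup>2))) = \<omega>\<^sup>2 * lorentz_moment \<omega> b n"
    unfolding lorentz_moment_def by (rule integral_mult[OF integrable, symmetric])
  finally show ?thesis .
qed

lemma pole_correction_rec: "pole_correction \<omega> (n + 2) = - \<omega>\<^sup>2 * pole_correction \<omega> n"
proof -
  have "(\<i> * complex_of_real \<omega>) ^ (n + 2) = complex_of_real (- \<omega>\<^sup>2) * (\<i> * complex_of_real \<omega>) ^ n"
    by (simp add: power_add power2_eq_square algebra_simps)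
  then show ?thesis
    unfolding pole_correction_def by (cases "\<omega> = 0") (simp_all add: field_simps power2_eq_square)
qed

lemma fp_expansion_0:
  assumes "0 < \<omega>" "\<omega> < b"
  shows "fp_expansion \<omega> b 0 = - arctan (\<omega> / b) / \<omega>"
proof -
  have "0 < b" using assms by simp
  have term_eq: "fp_expansion_term \<omega> b 0 k
      = - (1 / \<omega>) * ((-1) ^ k * (1 / real (k * 2 + 1) * (\<omega> / b) ^ (k * 2 + 1)))" for k
  proof -
    have "pow_antideriv b 0 (2 * k + 2) = b powr (- real (2 * k + 1)) / (- real (2 * k + 1))"
      unfolding pow_antideriv_def by simp
    also have "b powr (- real (2 * k + 1)) = 1 / b ^ (2 * k + 1)"
      by (simp only: powr_minus powr_realpow[OF \<open>0 < b\<close>]) (simp add: divide_inverse)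
    also have "1 / b ^ (2 * k + 1) / (- real (2 * k + 1)) = - (1 / b ^ (2 * k + 1) / real (2 * k + 1))"
      by (rule divide_minus_right)
    finally have antideriv: "pow_antideriv b 0 (2 * k + 2) = - (1 / b ^ (2 * k + 1) / real (2 * k + 1))" .
    have power: "(\<omega> / b) ^ (k * 2 + 1) = \<omega> ^ (2 * k) * \<omega> / b ^ (2 * k + 1)"
      by (simp add: power_divide mult.commute[of k 2])
    have "real (k * 2 + 1) = real (2 * k + 1)" by (simp add: mult.commute)
    then show ?thesis
      unfolding fp_expansion_term_def antideriv power using assms \<open>0 < b\<close> by (simp add: field_simps)
  qed
  have "(\<lambda>k. fp_expansion_term \<omega> b 0 k) sums (- (1 / \<omega>) * arctan (\<omega> / b))"
  proof -
    have "\<bar>\<omega> / b\<bar> \<le> 1" using assms by simp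
    then show ?thesis
      unfolding term_eq arctan_series[OF \<open>\<bar>\<omega> / b\<bar> \<le> 1\<close>]
      by (intro sums_mult summable_sums summable_arctan_series)
  qed
  then show ?thesis using sums_unique2[OF sums_fp_expansion[OF assms, of 0]] by simp
qed

lemma lorentz_moment_0:
  assumes "0 < \<omega>" "0 \<le> b"
  shows "lorentz_moment \<omega> b 0 = arctan (b / \<omega>) / \<omega>"
proof -
  have "((\<lambda>x. x ^ 0 / (\<omega>\<^sup>2 + x\<^sup>2)) has_integral (arctan (b / \<omega>) / \<omega> - arctan (0 / \<omega>) / \<omega>)) {0..b}"
  proof (rule fundamental_theorem_of_calculus[OF assms(2)])
    fix x :: real assume "x \<in> {0..b}"
    have "((\<lambda>x. arctan (x / \<omega>) / \<omega>) has_real_derivative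
        (inverse (1 + (x / \<omega>)\<^sup>2) * (1 / \<omega>)) / \<omega>) (at x)"
      by (intro derivative_eq_intros) (use assms in auto)
    moreover have "(inverse (1 + (x / \<omega>)\<^sup>2) * (1 / \<omega>)) / \<omega> = x ^ 0 / (\<omega>\<^sup>2 + x\<^sup>2)"
    proof -
      have "\<omega>\<^sup>2 * (1 + (x / \<omega>)\<^sup>2) = \<omega>\<^sup>2 + x\<^sup>2" using assms by (simp add: power_divide field_simps)
      moreover have "(inverse (1 + (x / \<omega>)\<^sup>2) * (1 / \<omega>)) / \<omega> = 1 / (\<omega>\<^sup>2 * (1 + (x / \<omega>)\<^sup>2))"
        by (simp add: power2_eq_square divide_inverse mult_ac)
      ultimately show ?thesis by simp
    qed
    ultimately show "((\<lambda>x. arctan (x / \<omega>) / \<omega>) has_vector_derivative x ^ 0 / (\<omega>\<^sup>2 + x\<^sup>2))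
        (at x within {0..b})"
      by (metis has_field_derivative_at_within has_real_derivative_iff_has_vector_derivative)
  qed
  then show ?thesis unfolding lorentz_moment_def by (simp add: integral_unique)
qed

lemma fp_expansion_eq_0:
  assumes "0 < \<omega>" "\<omega> < b"
  shows "fp_expansion \<omega> b 0 = lorentz_moment \<omega> b 0 - pole_correction \<omega> 0"
proof -
  have "arctan (1 / (b / \<omega>)) = sgn (b / \<omega>) * pi / 2 - arctan (b / \<omega>)"
    by (rule Transcendental.arctan_inverse) (use assms in auto)
  then have "arctan (\<omega> / b) = pi / 2 - arctan (b / \<omega>)" using assms by simp
  then show ?thesis
    using assms by (simp add: fp_expansion_0 lorentz_moment_0 pole_correction_def field_simps)
qed

lemma fp_expansion_1:
  assumes "0 < \<omega>" "\<omega> < b"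
  shows "fp_expansion \<omega> b 1 = ln b + ln (1 + (\<omega> / b)\<^sup>2) / 2"
proof -
  have "0 < b" using assms by simp
  define y where "y = (\<omega> / b)\<^sup>2"
  have "\<bar>y\<bar> < 1" using norm_square_ratio_less_1[OF assms] by (simp add: y_def)
  have ln_sums: "(\<lambda>k. - ((-y) ^ Suc k) / of_nat (Suc k)) sums ln (1 + y)"
    using ln_series'[OF \<open>\<bar>y\<bar> < 1\<close>] sums_Suc_iff[of "\<lambda>n. - ((-y) ^ n) / of_nat n"] by simp
  have term_eq: "fp_expansion_term \<omega> b 1 (Suc k) = (1/2) * (- ((-y) ^ Suc k) / of_nat (Suc k))" for k
  proof -
    have "pow_antideriv b 1 (2 * Suc k + 2) = b powr (- real (2 * k + 2)) / (- real (2 * k + 2))"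
      unfolding pow_antideriv_def by simp
    also have "b powr (- real (2 * k + 2)) = 1 / b ^ (2 * k + 2)"
      by (simp only: powr_minus powr_realpow[OF \<open>0 < b\<close>]) (simp add: divide_inverse)
    also have "1 / b ^ (2 * k + 2) / (- real (2 * k + 2)) = - (1 / b ^ (2 * k + 2) / real (2 * k + 2))"
      by (rule divide_minus_right)
    also have "real (2 * k + 2) = 2 * real (Suc k)" by simp
    finally have antideriv: "pow_antideriv b 1 (2 * Suc k + 2) = - (1 / b ^ (2 * k + 2) / (2 * real (Suc k)))" .
    have "y ^ Suc k = \<omega> ^ (2 * k + 2) / b ^ (2 * k + 2)"
      unfolding y_def power_mult[symmetric] power_divide by simp
    then have power: "(- y) ^ Suc k = (-1) ^ Suc k * (\<omega> ^ (2 * k + 2) / b ^ (2 * k + 2))"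
      by (metis power_minus)
    have "\<omega> ^ (2 * Suc k) = \<omega> ^ (2 * k + 2)" by simp
    then show ?thesis
      unfolding fp_expansion_term_def antideriv power using \<open>0 < b\<close> by (simp add: field_simps)
  qed
  have "(\<lambda>k. fp_expansion_term \<omega> b 1 (Suc k)) sums ((1/2) * ln (1 + y))"
    unfolding term_eq by (rule sums_mult[OF ln_sums])
  then have "fp_expansion_term \<omega> b 1 sums ((1/2) * ln (1 + y) + fp_expansion_term \<omega> b 1 0)"
    by (simp only: sums_Suc_iff)
  then have "fp_expansion \<omega> b 1 = (1/2) * ln (1 + y) + fp_expansion_term \<omega> b 1 0"
    using sums_unique2[OF sums_fp_expansion[OF assms, of 1]] by simp
  moreover have "fp_expansion_term \<omega> b 1 0 = ln b"
    by (simp add: fp_expansion_term_def pow_antideriv_def)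
  ultimately show ?thesis unfolding y_def by simp
qed

lemma lorentz_moment_1:
  assumes "0 < \<omega>" "0 \<le> b"
  shows "lorentz_moment \<omega> b 1 = ln (\<omega>\<^sup>2 + b\<^sup>2) / 2 - ln (\<omega>\<^sup>2) / 2"
proof -
  have pos: "0 < \<omega>\<^sup>2 + x\<^sup>2" for x :: real using assms by (simp add: add_pos_nonneg)
  have "((\<lambda>x. x ^ 1 / (\<omega>\<^sup>2 + x\<^sup>2)) has_integral (ln (\<omega>\<^sup>2 + b\<^sup>2) / 2 - ln (\<omega>\<^sup>2 + 0\<^sup>2) / 2)) {0..b}"
  proof (rule fundamental_theorem_of_calculus[OF assms(2)])
    fix x :: real assume "x \<in> {0..b}"
    have inner: "((\<lambda>x. \<omega>\<^sup>2 + x\<^sup>2) has_real_derivative 2 * x) (at x)"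
      by (auto intro!: derivative_eq_intros)
    have "((\<lambda>x. ln (\<omega>\<^sup>2 + x\<^sup>2)) has_real_derivative 1 / (\<omega>\<^sup>2 + x\<^sup>2) * (2 * x)) (at x)"
      by (rule DERIV_chain2[OF DERIV_ln_divide[OF pos] inner])
    then have "((\<lambda>x. ln (\<omega>\<^sup>2 + x\<^sup>2) / 2) has_real_derivative (2 * x) / (\<omega>\<^sup>2 + x\<^sup>2) / 2) (at x)"
      by (rule DERIV_cong[OF DERIV_cdivide]) simp
    moreover have "(2 * x) / (\<omega>\<^sup>2 + x\<^sup>2) / 2 = x ^ 1 / (\<omega>\<^sup>2 + x\<^sup>2)"
      unfolding power_one_right
      by (metis nonzero_mult_div_cancel_left zero_neq_numeral times_divide_eq_right)
    ultimately have "((\<lambda>x. ln (\<omega>\<^sup>2 + x\<^sup>2) / 2) has_real_derivative x ^ 1 / (\<omega>\<^sup>2 + x\<^sup>2)) (at x)"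
      by (simp only:)
    then show "((\<lambda>x. ln (\<omega>\<^sup>2 + x\<^sup>2) / 2) has_vector_derivative x ^ 1 / (\<omega>\<^sup>2 + x\<^sup>2))
        (at x within {0..b})"
      by (metis has_field_derivative_at_within has_real_derivative_iff_has_vector_derivative)
  qed
  then show ?thesis unfolding lorentz_moment_def by (simp add: integral_unique)
qed

lemma fp_expansion_eq_1:
  assumes "0 < \<omega>" "\<omega> < b"
  shows "fp_expansion \<omega> b 1 = lorentz_moment \<omega> b 1 - pole_correction \<omega> 1"
proof -
  have "0 < b" using assms by simp
  have "1 + (\<omega> / b)\<^sup>2 = (\<omega>\<^sup>2 + b\<^sup>2) / b\<^sup>2" using \<open>0 < b\<close> by (simp add: field_simps power_divide)
  then have ln_ratio: "ln (1 + (\<omega> / b)\<^sup>2) = ln (\<omega>\<^sup>2 + b\<^sup>2) - 2 * ln b"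
    using assms by (simp add: ln_div add_pos_pos ln_realpow)
  have ln_square: "ln (\<omega>\<^sup>2) = 2 * ln \<omega>" using assms by (simp add: ln_realpow)
  have "pole_correction \<omega> 1 = - ln \<omega>" using assms by (simp add: pole_correction_def)
  then show ?thesis
    unfolding fp_expansion_1[OF assms] lorentz_moment_1[OF assms(1) less_imp_le[OF \<open>0 < b\<close>]]
      ln_ratio ln_square
    by (simp add: field_simps)
qed

lemma fp_expansion_eq:
  assumes "0 < \<omega>" "\<omega> < b"
  shows "fp_expansion \<omega> b n = lorentz_moment \<omega> b n - pole_correction \<omega> n"
proof (induction n rule: nat_less_induct)
  case (1 n)
  show ?case
  proof (cases "n < 2")
    case True
    then show ?thesis using fp_expansion_eq_0[OF assms] fp_expansion_eq_1[OF assms]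
      by (cases n) (auto simp: less_2_cases_iff)
  next
    case False
    then obtain m where n: "n = m + 2" by (metis add.commute le_Suc_ex not_less)
    then have IH: "fp_expansion \<omega> b m = lorentz_moment \<omega> b m - pole_correction \<omega> m"
      using 1 by simp
    have "0 \<le> b" using assms by simp
    show ?thesis
      unfolding n fp_expansion_rec[OF assms] lorentz_moment_rec[OF assms(1) \<open>0 \<le> b\<close>]
        pole_correction_rec IH
      by (simp add: algebra_simps)
  qed
qed

lemma summable_abs_real_power_series:
  fixes c :: "nat \<Rightarrow> real"
  assumes "\<And>z. (\<lambda>n. complex_of_real (c n) * z ^ n) sums F z" and "0 \<le> r"
  shows "summable (\<lambda>n. \<bar>c n\<bar> * r ^ n)"
proof -
  have "summable (\<lambda>n. complex_of_real (c n) * (complex_of_real (r + 1)) ^ n)"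
    using assms(1) sums_summable by blast
  then have "summable (\<lambda>n. norm (complex_of_real (c n) * (complex_of_real r) ^ n))"
    by (rule powser_insidea) (use \<open>0 \<le> r\<close> in simp)
  then show ?thesis using \<open>0 \<le> r\<close> by (simp add: norm_mult norm_power)
qed

lemma sums_lorentz_moment:
  fixes c :: "nat \<Rightarrow> real" and f :: "real \<Rightarrow> real"
  assumes "0 < \<omega>" "0 \<le> b" and f_sums: "\<And>x. (\<lambda>n. c n * x ^ n) sums f x"
    and abs_summable: "summable (\<lambda>n. \<bar>c n\<bar> * b ^ n)"
  shows "(\<lambda>n. c n * lorentz_moment \<omega> b n) sums integral {0..b} (\<lambda>x. f x / (\<omega>\<^sup>2 + x\<^sup>2))"
proof -
  have pos: "0 < \<omega>\<^sup>2 + x\<^sup>2" for x :: real using assms by (simp add: add_pos_nonneg)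
  have "(\<lambda>n. integral {0..b} (\<lambda>x. c n * (x ^ n / (\<omega>\<^sup>2 + x\<^sup>2)))) sums
      integral {0..b} (\<lambda>x. \<Sum>n. c n * (x ^ n / (\<omega>\<^sup>2 + x\<^sup>2)))"
  proof (rule sums_integral_termwise[where M = "\<lambda>n. \<bar>c n\<bar> * b ^ n * (1 / \<omega>\<^sup>2)"])
    show "continuous_on {0..b} (\<lambda>x. c n * (x ^ n / (\<omega>\<^sup>2 + x\<^sup>2)))" for n
      using pos by (intro continuous_intros) (auto simp: less_imp_neq[symmetric])
    show "summable (\<lambda>n. \<bar>c n\<bar> * b ^ n * (1 / \<omega>\<^sup>2))" by (intro summable_mult2 abs_summable)
    fix n x assume x: "x \<in> {0..b}"
    have "\<bar>c n * (x ^ n / (\<omega>\<^sup>2 + x\<^sup>2))\<bar> = \<bar>c n\<bar> * (x ^ n / (\<omega>\<^sup>2 + x\<^sup>2))"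
      using x pos[of x] by (simp add: abs_mult)
    also have "\<dots> \<le> \<bar>c n\<bar> * (b ^ n / \<omega>\<^sup>2)"
      using x assms by (intro mult_left_mono frac_le power_mono) auto
    finally show "\<bar>c n * (x ^ n / (\<omega>\<^sup>2 + x\<^sup>2))\<bar> \<le> \<bar>c n\<bar> * b ^ n * (1 / \<omega>\<^sup>2)" by simp
  qed
  moreover have "integral {0..b} (\<lambda>x. c n * (x ^ n / (\<omega>\<^sup>2 + x\<^sup>2))) = c n * lorentz_moment \<omega> b n" for n
    unfolding lorentz_moment_def
    using integral_cmul[of "{0..b}" "c n" "\<lambda>x. x ^ n / (\<omega>\<^sup>2 + x\<^sup>2)"] by (simp only: real_scaleR_def)
  moreover have "(\<Sum>n. c n * (x ^ n / (\<omega>\<^sup>2 + x\<^sup>2))) = f x / (\<omega>\<^sup>2 + x\<^sup>2)" for x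
    using sums_divide[OF f_sums[of x], of "\<omega>\<^sup>2 + x\<^sup>2"] by (simp add: sums_iff)
  ultimately show ?thesis by simp
qed

lemma sums_pole_correction:
  fixes c :: "nat \<Rightarrow> real"
  assumes "\<And>z. (\<lambda>n. complex_of_real (c n) * z ^ n) sums F z"
  shows "(\<lambda>n. c n * pole_correction \<omega> n) sums
    (pi / (2 * \<omega>) * Re (F (\<i> * complex_of_real \<omega>)) - ln \<omega> / \<omega> * Im (F (\<i> * complex_of_real \<omega>)))"
proof -
  define z where "z = \<i> * complex_of_real \<omega>"
  have "(\<lambda>n. c n * Re (z ^ n)) sums Re (F z)" and "(\<lambda>n. c n * Im (z ^ n)) sums Im (F z)"
    using sums_Re[OF assms[of z]] sums_Im[OF assms[of z]] by simp_all
  then have "(\<lambda>n. pi / (2 * \<omega>) * (c n * Re (z ^ n)) - ln \<omega> / \<omega> * (c n * Im (z ^ n))) sums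
      (pi / (2 * \<omega>) * Re (F z) - ln \<omega> / \<omega> * Im (F z))"
    by (intro sums_diff sums_mult)
  then show ?thesis
    unfolding pole_correction_def z_def by (simp add: algebra_simps)
qed

lemma sums_fp_expansion_swap:
  fixes c :: "nat \<Rightarrow> real"
  assumes "0 < \<omega>" "\<omega> < b" and abs_summable: "summable (\<lambda>n. \<bar>c n\<bar> * b ^ n)"
    and "(\<lambda>n. c n * fp_expansion \<omega> b n) sums X"
  shows "(\<lambda>k. \<Sum>n. c n * fp_expansion_term \<omega> b n k) sums X"
proof (rule sums_swap_of_product_bound[where G = "\<lambda>n k. c n * fp_expansion_term \<omega> b n k"
      and u = "\<lambda>n. \<bar>c n\<bar> * ((1 + \<bar>ln b\<bar>) / b * b ^ n)" and v = "\<lambda>k. ((\<omega> / b)\<^sup>2) ^ k"])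
  have "0 < b" using assms by simp
  show "\<bar>c n * fp_expansion_term \<omega> b n k\<bar> \<le> \<bar>c n\<bar> * ((1 + \<bar>ln b\<bar>) / b * b ^ n) * ((\<omega> / b)\<^sup>2) ^ k"
    for n k
  proof -
    have "\<bar>c n\<bar> * \<bar>fp_expansion_term \<omega> b n k\<bar>
        \<le> \<bar>c n\<bar> * ((1 + \<bar>ln b\<bar>) / b * b ^ n * ((\<omega> / b)\<^sup>2) ^ k)"
      by (intro mult_left_mono abs_fp_expansion_term_le assms) simp
    then show ?thesis by (simp add: abs_mult mult_ac)
  qed
  show "summable (\<lambda>n. \<bar>c n\<bar> * ((1 + \<bar>ln b\<bar>) / b * b ^ n))"
    using summable_mult2[OF abs_summable, of "(1 + \<bar>ln b\<bar>) / b"] by (simp add: mult_ac)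
  show "summable (\<lambda>k. ((\<omega> / b)\<^sup>2) ^ k)"
    by (intro summable_geometric norm_square_ratio_less_1 assms)
  show "0 \<le> \<bar>c n\<bar> * ((1 + \<bar>ln b\<bar>) / b * b ^ n)" for n using \<open>0 < b\<close> by simp
  show "0 \<le> ((\<omega> / b)\<^sup>2) ^ k" for k by simp
  show "(\<lambda>k. c n * fp_expansion_term \<omega> b n k) sums (c n * fp_expansion \<omega> b n)" for n
    by (rule sums_mult[OF sums_fp_expansion[OF assms(1,2)]])
  show "(\<lambda>n. c n * fp_expansion_term \<omega> b n k) sums (\<Sum>n. c n * fp_expansion_term \<omega> b n k)" for k
  proof -
    have "summable (\<lambda>n. (-1) ^ k * \<omega> ^ (2 * k) * (c n * pow_antideriv b n (2 * k + 2)))"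
      using \<open>0 < b\<close> by (intro summable_mult summable_pow_antideriv[OF _ order_refl abs_summable])
    then have "summable (\<lambda>n. c n * fp_expansion_term \<omega> b n k)"
      by (simp add: fp_expansion_term_def mult_ac)
    then show ?thesis by (rule summable_sums)
  qed
qed (fact assms)

lemma finite_part_power_series:
  fixes c :: "nat \<Rightarrow> real" and f :: "real \<Rightarrow> real"
  assumes "0 < b" and f_sums: "\<And>x. (\<lambda>n. c n * x ^ n) sums f x"
    and abs_summable: "summable (\<lambda>n. \<bar>c n\<bar> * b ^ n)"
  shows "(-1) ^ k * \<omega> ^ (2 * k) * finite_part f (2 * k + 2) b
    = (\<Sum>n. c n * fp_expansion_term \<omega> b n k)"
proof -
  have "finite_part f (Suc (2 * k + 1)) b = (\<Sum>n. c n * pow_antideriv b n (Suc (2 * k + 1)))"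
    by (intro finite_part_eqI has_finite_part_power_series assms)
  then show ?thesis
    using suminf_mult[OF summable_pow_antideriv[OF \<open>0 < b\<close> order_refl abs_summable],
        of "(-1) ^ k * \<omega> ^ (2 * k)" "2 * k + 2"]
    by (simp add: fp_expansion_term_def mult_ac)
qed

theorem mainTheorem5:
  fixes F :: "complex \<Rightarrow> complex" and \<omega> a :: real
  assumes "F holomorphic_on UNIV"
    and "\<forall>x::real. F (complex_of_real x) \<in> \<real>"
    and "0 < \<omega>" and "\<omega> < a"
  shows "(\<lambda>k. (-1) ^ k * \<omega> ^ (2 * k) *
            finite_part (\<lambda>x. Re (F (complex_of_real x))) (2 * k + 2) a)
         sums (integral {0..a} (\<lambda>x. Re (F (complex_of_real x)) / (\<omega>\<^sup>2 + x\<^sup>2))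
               - pi / (2 * \<omega>) * Re (F (\<i> * complex_of_real \<omega>))
               + ln \<omega> / \<omega> * Im (F (\<i> * complex_of_real \<omega>)))"
proof -
  obtain c where F_sums: "\<And>z. (\<lambda>n. complex_of_real (c n) * z ^ n) sums F z"
    using entire_real_on_Reals_real_power_series[OF assms(1,2)] by blast
  define f where "f = (\<lambda>x. Re (F (complex_of_real x)))"
  have f_sums: "(\<lambda>n. c n * x ^ n) sums f x" for x
    using sums_Re[OF F_sums[of "complex_of_real x"]] by (simp add: f_def flip: of_real_power)
  have "0 < a" using assms by simp
  have abs_summable: "summable (\<lambda>n. \<bar>c n\<bar> * a ^ n)"
    using summable_abs_real_power_series[OF F_sums] \<open>0 < a\<close> by simp
  have "(\<lambda>n. c n * fp_expansion \<omega> a n) sums (integral {0..a} (\<lambda>x. f x / (\<omega>\<^sup>2 + x\<^sup>2))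
      - pi / (2 * \<omega>) * Re (F (\<i> * complex_of_real \<omega>)) + ln \<omega> / \<omega> * Im (F (\<i> * complex_of_real \<omega>)))"
    using sums_diff[OF sums_lorentz_moment[OF assms(3) _ f_sums abs_summable] sums_pole_correction[OF F_sums]]
      \<open>0 < a\<close> by (simp add: fp_expansion_eq[OF assms(3,4)] algebra_simps)
  then show ?thesis
    unfolding finite_part_power_series[OF \<open>0 < a\<close> f_sums abs_summable, unfolded f_def] f_def
    by (rule sums_fp_expansion_swap[OF assms(3,4) abs_summable])
qed

end
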